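(* Let $x_0,x_1,\dots,x_N\in\mathbb{R}$ be the features of a time series and let $\|\cdot\|$ be a norm. Let $\mathcal{D}$ be a probability distribution with support $[0,1)$ and $e=\mathbb{E}[\mathcal{D}]$ its mean. Let $\lambda_1,\dots,\lambda_N$ be drawn independently from $\mathcal{D}$, and let $\lambda_0$ be a dummy value. Define recursively $x_{0,\lambda_0}=x_0$ and $x_{i,\lambda_i}=(1-\lambda_i)x_i+\lambda_i x_{i-1,\lambda_{i-1}}$ for $i\ge 1$. For $k\in[0:N]$ let $g(\lambda_k)=(1-\lambda_k)(1-\delta_{0k})+(1-\operatorname{sign}(k))$, where $\delta_{ab}=1$ if $a=b$ and $0$ otherwise, and $\operatorname{sign}(0)=0$, $\operatorname{sign}(t)=1$ for $t>0$, $\operatorname{sign}(t)=-1$ for $t<0$. Let $m=\max_{i\in[0:N]}\|x_i\|$ and $m'=\max_{i\in[1:N]}\|x_i-x_{i-1}\|$. Then for every $n\in[0:N]$: (1) $x_{n,\lambda_n}=\sum_{k=0}^{n}\Big(\prod_{i=k+1}^{n}\lambda_i\Big)g(\lambda_k)\,x_k$ (an empty product equals $1$); (2) $\big\|\mathbb{E}_{\lambda_1,\dots,\lambda_n}[x_{n,\lambda_n}-x_n]\big\|\le\min\{3em,\ \tfrac{e}{1-e}m',\ Nem'\}$, and, for every fixed value of $\lambda_n\in[0,1)$, $\mathbb{E}_{\lambda_1,\dots,\lambda_{n-1}}\big[\|x_{n,\lambda_n}-x_n\|\big]\le 2\lambda_n m$.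
   Context: This is the Recursive Interpolation Method (RIM) for time series augmentation: the augmented features $x_{i,\lambda_i}$ are obtained by recursively taking convex combinations of the current original feature with the previous augmented feature. *)

theory Defs
  imports "HOL-Probability.Probability"
begin

definition is_norm :: "(real \<Rightarrow> real) \<Rightarrow> bool" where
  "is_norm nrm \<longleftrightarrow>
     (\<forall>x. 0 \<le> nrm x) \<and> (\<forall>x. nrm x = 0 \<longleftrightarrow> x = 0) \<and>
     (\<forall>c x. nrm (c * x) = \<bar>c\<bar> * nrm x) \<and>
     (\<forall>x y. nrm (x + y) \<le> nrm x + nrm y)"

text \<open>Recursive Interpolation Method: rim x l i is the augmented feature x_{i,lambda_i}.
  The value l 0 (the dummy lambda_0) is never used.\<close>
fun rim :: "(nat \<Rightarrow> real) \<Rightarrow> (nat \<Rightarrow> real) \<Rightarrow> nat \<Rightarrow> real" where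
  "rim x l 0 = x 0"
| "rim x l (Suc i) = (1 - l (Suc i)) * x (Suc i) + l (Suc i) * rim x l i"

definition kdelta :: "nat \<Rightarrow> nat \<Rightarrow> real" where
  "kdelta a b = (if a = b then 1 else 0)"

definition gfun :: "(nat \<Rightarrow> real) \<Rightarrow> nat \<Rightarrow> real" where
  "gfun l k = (1 - l k) * (1 - kdelta 0 k) + (1 - sgn (real k))"

definition mmax :: "(real \<Rightarrow> real) \<Rightarrow> (nat \<Rightarrow> real) \<Rightarrow> nat \<Rightarrow> real" where
  "mmax nrm x N = Max ((\<lambda>i. nrm (x i)) ` {0..N})"

text \<open>m' = max over [1:N] of norms of consecutive differences (0 if N = 0, i.e. empty max).\<close>
definition mmax' :: "(real \<Rightarrow> real) \<Rightarrow> (nat \<Rightarrow> real) \<Rightarrow> nat \<Rightarrow> real" where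
  "mmax' nrm x N = Max (insert 0 ((\<lambda>i. nrm (x i - x (i - 1))) ` {1..N}))"

end

theory Submission
  imports Defs
begin

(* Each step of the recursion is affine in its weight, x_{n,l} = x_n + l_n (x_{n-1,l} - x_n),
   and unrolling it gives the closed form. Since l_n is independent of the earlier weights, on
   which alone x_{n-1,l} depends, integrating out l_n replaces it by the mean e: the expected
   augmented feature is the same recursion run with all weights equal to e.
   The bounds are then deterministic. A convex combination of the x_i has norm at most m, which
   gives 2 l_n m and 2 e m; and d_n = x_{n,e} - x_n satisfies |d_n| <= e (|d_{n-1}| + m'), so
   |d_n| <= (e + ... + e^n) m', which is at most both e/(1-e) m' and n e m'. *)

lemma is_norm_nonneg: "is_norm nrm \<Longrightarrow> 0 \<le> nrm a"
  unfolding is_norm_def by blast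

lemma is_norm_mult: "is_norm nrm \<Longrightarrow> nrm (c * a) = \<bar>c\<bar> * nrm a"
  unfolding is_norm_def by blast

lemma is_norm_triangle: "is_norm nrm \<Longrightarrow> nrm (a + b) \<le> nrm a + nrm b"
  unfolding is_norm_def by blast

lemma is_norm_minus_commute: "is_norm nrm \<Longrightarrow> nrm (a - b) = nrm (b - a)"
  using is_norm_mult[of nrm "-1" "b - a"] by simp

lemma is_norm_diff_le: "is_norm nrm \<Longrightarrow> nrm (a - b) \<le> nrm a + nrm b"
  using is_norm_triangle[of nrm a "-b"] is_norm_mult[of nrm "-1" b] by simp

lemma is_norm_abs: "is_norm abs"
  unfolding is_norm_def by (auto simp: abs_mult)

lemma is_norm_convex_combination_le:
  assumes "is_norm nrm" "a \<in> {0..1}" "nrm u \<le> M" "nrm v \<le> M"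
  shows "nrm ((1 - a) * u + a * v) \<le> M"
proof -
  have "nrm ((1 - a) * u + a * v) \<le> nrm ((1 - a) * u) + nrm (a * v)"
    by (rule is_norm_triangle[OF assms(1)])
  also have "\<dots> = (1 - a) * nrm u + a * nrm v"
    using assms(1,2) by (simp add: is_norm_mult)
  also have "\<dots> \<le> (1 - a) * M + a * M"
    using assms(2-4) by (intro add_mono mult_left_mono) auto
  finally show ?thesis by (simp add: algebra_simps)
qed

lemma mmax_ge: "i \<le> N \<Longrightarrow> nrm (x i) \<le> mmax nrm x N"
  unfolding mmax_def by (intro Max_ge) auto

lemma mmax'_ge: "i \<in> {1..N} \<Longrightarrow> nrm (x i - x (i - 1)) \<le> mmax' nrm x N"
  unfolding mmax'_def by (intro Max_ge) auto

lemma mmax'_nonneg: "0 \<le> mmax' nrm x N"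
  unfolding mmax'_def by (intro Max_ge) auto

lemma rim_fun_upd: "n < j \<Longrightarrow> rim x (l(j := y)) n = rim x l n"
  by (induction n) auto

lemma rim_Suc_minus: "rim x l (Suc n) - x (Suc n) = l (Suc n) * (rim x l n - x (Suc n))"
  by (simp add: algebra_simps)

lemma rim_eq_sum: "rim x l n = (\<Sum>k = 0..n. (\<Prod>i = k+1..n. l i) * gfun l k * x k)"
proof (induction n)
  case 0
  then show ?case by (simp add: gfun_def kdelta_def)
next
  case (Suc n)
  have "(\<Sum>k = 0..Suc n. (\<Prod>i = k+1..Suc n. l i) * gfun l k * x k)
      = l (Suc n) * (\<Sum>k = 0..n. (\<Prod>i = k+1..n. l i) * gfun l k * x k)
        + (1 - l (Suc n)) * x (Suc n)"
    by (simp add: gfun_def kdelta_def sum_distrib_left prod.cl_ivl_Suc mult_ac)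
  then show ?case using Suc.IH by simp
qed

lemma rim_norm_le:
  assumes "is_norm nrm" "\<forall>i\<le>n. nrm (x i) \<le> M" "\<forall>i\<in>{1..n}. l i \<in> {0..1}"
  shows "nrm (rim x l n) \<le> M"
  using assms(2,3)
  by (induction n) (auto intro!: is_norm_convex_combination_le[OF assms(1)])

lemma rim_dist_le:
  assumes "is_norm nrm" "\<forall>i\<le>n. nrm (x i) \<le> M" "\<forall>i\<in>{1..n}. l i \<in> {0..1}" "0 \<le> l n"
  shows "nrm (rim x l n - x n) \<le> 2 * l n * M"
proof (cases n)
  case 0
  then show ?thesis
    using assms is_norm_mult[OF assms(1), of 0] is_norm_nonneg[OF assms(1), of "x 0"] by simp
next
  case (Suc k)
  have "nrm (rim x l k) \<le> M"
    using assms(2,3) Suc by (intro rim_norm_le[OF assms(1)]) auto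
  moreover have "nrm (x n) \<le> M" using assms(2) by simp
  ultimately have "nrm (rim x l k - x n) \<le> 2 * M"
    using is_norm_diff_le[OF assms(1), of "rim x l k" "x n"] by linarith
  have "nrm (rim x l n - x n) = l n * nrm (rim x l k - x n)"
    using Suc rim_Suc_minus[of x l k] is_norm_mult[OF assms(1)] assms(4) by simp
  also have "\<dots> \<le> l n * (2 * M)"
    using \<open>nrm (rim x l k - x n) \<le> 2 * M\<close> assms(4) by (rule mult_left_mono)
  finally show ?thesis by (simp add: mult_ac)
qed

lemma rim_const_dist_le_sum_power:
  assumes "is_norm nrm" "0 \<le> a" "\<forall>i\<in>{1..n}. nrm (x i - x (i - 1)) \<le> M'"
  shows "nrm (rim x (\<lambda>_. a) n - x n) \<le> (\<Sum>k<n. a ^ Suc k) * M'"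
  using assms(3)
proof (induction n)
  case 0
  then show ?case using is_norm_mult[OF assms(1), of 0] by simp
next
  case (Suc n)
  have IH: "nrm (rim x (\<lambda>_. a) n - x n) \<le> (\<Sum>k<n. a ^ Suc k) * M'"
    using Suc by auto
  have step: "nrm (x n - x (Suc n)) \<le> M'"
    using Suc.prems[rule_format, of "Suc n"] is_norm_minus_commute[OF assms(1), of "x n"] by simp
  have "nrm (rim x (\<lambda>_. a) (Suc n) - x (Suc n))
      = nrm (a * ((rim x (\<lambda>_. a) n - x n) + (x n - x (Suc n))))"
    by (rule arg_cong[where f = nrm]) (simp add: algebra_simps)
  also have "\<dots> = a * nrm ((rim x (\<lambda>_. a) n - x n) + (x n - x (Suc n)))"
    using is_norm_mult[OF assms(1)] assms(2) by simp
  also have "\<dots> \<le> a * (nrm (rim x (\<lambda>_. a) n - x n) + nrm (x n - x (Suc n)))"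
    using assms(1,2) by (intro mult_left_mono is_norm_triangle)
  also have "\<dots> \<le> a * ((\<Sum>k<n. a ^ Suc k) * M' + M')"
    using IH step assms(2) by (intro mult_left_mono add_mono) auto
  also have "\<dots> = (\<Sum>k<Suc n. a ^ Suc k) * M'"
    by (induction n) (simp_all add: algebra_simps)
  finally show ?case .
qed

lemma sum_power_Suc_le_geometric:
  fixes a :: real
  assumes "0 \<le> a" "a < 1"
  shows "(\<Sum>k<n. a ^ Suc k) \<le> a / (1 - a)"
proof -
  have "(\<Sum>k<n. a ^ Suc k) = a * (1 - a ^ n) / (1 - a)"
    using assms by (simp add: sum_distrib_left[symmetric] sum_gp_strict)
  also have "\<dots> \<le> a / (1 - a)"
    using assms by (intro divide_right_mono) (auto simp: mult_left_le)
  finally show ?thesis .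
qed

lemma sum_power_Suc_le_linear:
  fixes a :: real
  assumes "0 \<le> a" "a \<le> 1"
  shows "(\<Sum>k<n. a ^ Suc k) \<le> n * a"
proof -
  have "(\<Sum>k<n. a ^ Suc k) \<le> (\<Sum>k<n. a)"
    using assms by (intro sum_mono) (simp add: power_le_one mult_left_le)
  then show ?thesis by simp
qed

locale unit_interval_weights = prob_space D for D :: "real measure" +
  assumes sets_eq_borel: "sets D = sets borel"
    and AE_unit_interval: "AE t in D. t \<in> {0..<1}"
begin

lemma integrable_ident: "integrable D (\<lambda>t. t)"
proof (rule integrable_const_bound[where B = 1])
  show "AE t in D. norm t \<le> 1" using AE_unit_interval by eventually_elim auto
  show "(\<lambda>t. t) \<in> borel_measurable D" by (rule measurable_ident_sets[OF sets_eq_borel])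
qed

lemma mean_nonneg: "0 \<le> expectation (\<lambda>t. t)"
  using AE_unit_interval by (intro integral_nonneg_AE) auto

lemma mean_less_one: "expectation (\<lambda>t. t) < 1"
proof -
  have "expectation (\<lambda>t. t) < expectation (\<lambda>_. 1)"
    using AE_unit_interval integrable_ident by (intro integral_less_AE_space) (auto simp: emeasure_space_1)
  then show ?thesis by (simp add: prob_space)
qed

lemma prob_space_weights: "prob_space (PiM I (\<lambda>_. D))"
  by (intro prob_space_PiM prob_space_axioms)

lemma integrable_weights_const [simp]: "integrable (PiM I (\<lambda>_. D)) (\<lambda>_. c :: real)"
proof -
  interpret P: prob_space "PiM I (\<lambda>_. D)" by (rule prob_space_weights)
  show ?thesis by simp
qed

lemmas measure_space_weights [simp] = prob_space.prob_space[OF prob_space_weights]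

lemma AE_weights_unit_interval: "finite I \<Longrightarrow> AE l in PiM I (\<lambda>_. D). \<forall>i\<in>I. l i \<in> {0..<1}"
  by (intro eventually_ball_finite ballI AE_PiM_component prob_space_axioms AE_unit_interval) auto

lemma measurable_rim: "{1..n} \<subseteq> I \<Longrightarrow> (\<lambda>l. rim x l n) \<in> borel_measurable (PiM I (\<lambda>_. D))"
proof (induction n)
  case (Suc n)
  have "Suc n \<in> I" using Suc.prems by auto
  then have "(\<lambda>l. l (Suc n)) \<in> borel_measurable (PiM I (\<lambda>_. D))"
    using measurable_component_singleton[of "Suc n" I "\<lambda>_. D"]
    by (simp add: measurable_cong_sets[OF refl sets_eq_borel])
  moreover have "(\<lambda>l. rim x l n) \<in> borel_measurable (PiM I (\<lambda>_. D))"
    using Suc by (simp add: subset_eq)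
  ultimately show ?case by simp
qed simp

lemma integrable_rim:
  assumes "finite I" "{1..n} \<subseteq> I"
  shows "integrable (PiM I (\<lambda>_. D)) (\<lambda>l. rim x l n)"
proof -
  interpret P: prob_space "PiM I (\<lambda>_. D)" by (rule prob_space_weights)
  define M where "M = Max ((\<lambda>i. \<bar>x i\<bar>) ` {..n})"
  have M: "\<forall>i\<le>n. \<bar>x i\<bar> \<le> M" unfolding M_def by (auto intro: Max_ge)
  show ?thesis
  proof (rule P.integrable_const_bound[where B = M])
    show "AE l in PiM I (\<lambda>_. D). norm (rim x l n) \<le> M"
      using AE_weights_unit_interval[OF assms(1)]
    proof eventually_elim
      case (elim l)
      then have "\<forall>i\<in>{1..n}. l i \<in> {0..1}" using assms(2) by fastforce
      then show ?case using rim_norm_le[OF is_norm_abs M] by simp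
    qed
  qed (rule measurable_rim[OF assms(2)])
qed

lemma integral_rim:
  "integral\<^sup>L (PiM {1..n} (\<lambda>_. D)) (\<lambda>l. rim x l n) = rim x (\<lambda>_. expectation (\<lambda>t. t)) n"
proof (induction n)
  case 0
  show ?case by simp
next
  case (Suc n)
  interpret PS: product_sigma_finite "\<lambda>_. D"
    unfolding product_sigma_finite_def by (simp add: prob_space_imp_sigma_finite prob_space_axioms)
  let ?e = "expectation (\<lambda>t. t)"
  have ins: "{1..Suc n} = insert (Suc n) {1..n}" by auto
  have "integral\<^sup>L (PiM {1..Suc n} (\<lambda>_. D)) (\<lambda>l. rim x l (Suc n))
     = (\<integral>l. (\<integral>y. rim x (l(Suc n := y)) (Suc n) \<partial>D) \<partial>PiM {1..n} (\<lambda>_. D))"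
    unfolding ins by (rule PS.product_integral_insert) (auto intro!: integrable_rim simp del: rim.simps)
  also have "\<dots> = (\<integral>l. (1 - ?e) * x (Suc n) + ?e * rim x l n \<partial>PiM {1..n} (\<lambda>_. D))"
  proof (rule Bochner_Integration.integral_cong[OF refl])
    fix l
    have "(\<integral>y. rim x (l(Suc n := y)) (Suc n) \<partial>D) = (\<integral>y. x (Suc n) + y * (rim x l n - x (Suc n)) \<partial>D)"
      by (rule Bochner_Integration.integral_cong) (simp_all add: rim_fun_upd algebra_simps)
    also have "\<dots> = (1 - ?e) * x (Suc n) + ?e * rim x l n"
      using integrable_ident by (simp add: algebra_simps prob_space)
    finally show "(\<integral>y. rim x (l(Suc n := y)) (Suc n) \<partial>D) = (1 - ?e) * x (Suc n) + ?e * rim x l n" .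
  qed
  also have "\<dots> = (1 - ?e) * x (Suc n) + ?e * integral\<^sup>L (PiM {1..n} (\<lambda>_. D)) (\<lambda>l. rim x l n)"
    using integrable_rim[of "{1..n}" n x]
    by (subst Bochner_Integration.integral_add) auto
  finally show ?case using Suc.IH by simp
qed

lemma norm_integral_rim_minus_le:
  assumes "is_norm nrm" "\<forall>i\<le>n. nrm (x i) \<le> M" "\<forall>i\<in>{1..n}. nrm (x i - x (i - 1)) \<le> M'"
    and "0 \<le> M'"
  defines "e \<equiv> expectation (\<lambda>t. t)"
  shows "nrm (integral\<^sup>L (PiM {1..n} (\<lambda>_. D)) (\<lambda>l. rim x l n - x n))
    \<le> min (2 * e * M) (min (e / (1 - e) * M') (n * e * M'))"
proof -
  have e: "0 \<le> e" "e < 1" unfolding e_def by (fact mean_nonneg mean_less_one)+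
  have "integral\<^sup>L (PiM {1..n} (\<lambda>_. D)) (\<lambda>l. rim x l n - x n)
      = integral\<^sup>L (PiM {1..n} (\<lambda>_. D)) (\<lambda>l. rim x l n) - x n"
    using integrable_rim[of "{1..n}" n x] by simp
  also have "\<dots> = rim x (\<lambda>_. e) n - x n"
    unfolding e_def integral_rim ..
  finally have mean: "integral\<^sup>L (PiM {1..n} (\<lambda>_. D)) (\<lambda>l. rim x l n - x n) = rim x (\<lambda>_. e) n - x n" .
  have "nrm (rim x (\<lambda>_. e) n - x n) \<le> 2 * e * M"
    using rim_dist_le[OF assms(1,2), of "\<lambda>_. e"] e by simp
  moreover have "nrm (rim x (\<lambda>_. e) n - x n) \<le> (\<Sum>k<n. e ^ Suc k) * M'"
    using rim_const_dist_le_sum_power[OF assms(1) e(1) assms(3)] .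
  moreover have "(\<Sum>k<n. e ^ Suc k) * M' \<le> e / (1 - e) * M'"
    using sum_power_Suc_le_geometric[OF e] assms(4) by (rule mult_right_mono)
  moreover have "(\<Sum>k<n. e ^ Suc k) * M' \<le> n * e * M'"
    using sum_power_Suc_le_linear[of e n] e assms(4) by (intro mult_right_mono) auto
  ultimately show ?thesis unfolding mean by linarith
qed

lemma integral_norm_rim_upd_minus_le:
  assumes "is_norm nrm" "\<forall>i\<le>n. nrm (x i) \<le> M" "t \<in> {0..<1}"
  shows "(\<integral>l. nrm (rim x (l(n := t)) n - x n) \<partial>PiM {1..<n} (\<lambda>_. D)) \<le> 2 * t * M"
proof -
  have M: "0 \<le> M" using assms(2) is_norm_nonneg[OF assms(1), of "x 0"] by fastforce
  have "AE l in PiM {1..<n} (\<lambda>_. D). nrm (rim x (l(n := t)) n - x n) \<le> 2 * t * M"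
    using AE_weights_unit_interval[OF finite_atLeastLessThan]
  proof eventually_elim
    case (elim l)
    then have "\<forall>i\<in>{1..n}. (l(n := t)) i \<in> {0..1}" using assms(3) by fastforce
    then show ?case using rim_dist_le[OF assms(1,2), of "l(n := t)"] assms(3) by simp
  qed
  then have "(\<integral>l. nrm (rim x (l(n := t)) n - x n) \<partial>PiM {1..<n} (\<lambda>_. D))
      \<le> (\<integral>l. 2 * t * M \<partial>PiM {1..<n} (\<lambda>_. D))"
    using assms(3) M by (intro integral_mono_AE') auto
  then show ?thesis by simp
qed

end

theorem theorem1:
  fixes x :: "nat \<Rightarrow> real" and N :: nat and nrm :: "real \<Rightarrow> real"
    and D :: "real measure"
  assumes "is_norm nrm"
    and "prob_space D"
    and "sets D = sets borel"
    and "AE t in D. t \<in> {0..<1}"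
  defines "e \<equiv> integral\<^sup>L D (\<lambda>t. t)"
    and "m \<equiv> mmax nrm x N"
    and "m' \<equiv> mmax' nrm x N"
  shows "\<forall>n \<in> {0..N}.
     (\<forall>l :: nat \<Rightarrow> real. (\<forall>i\<in>{1..n}. l i \<in> {0..<1}) \<longrightarrow>
        rim x l n = (\<Sum>k = 0..n. (\<Prod>i = k+1..n. l i) * gfun l k * x k))
   \<and> nrm (integral\<^sup>L (PiM {1..n} (\<lambda>_. D)) (\<lambda>l. rim x l n - x n))
       \<le> min (3 * e * m) (min (e / (1 - e) * m') (real N * e * m'))
   \<and> (\<forall>t \<in> {0..<1}.
        integral\<^sup>L (PiM {1..<n} (\<lambda>_. D)) (\<lambda>l. nrm (rim x (l(n := t)) n - x n))
          \<le> 2 * t * m)"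
proof (intro ballI conjI allI impI)
  interpret unit_interval_weights D
    using assms(2-4) by (simp add: unit_interval_weights_def unit_interval_weights_axioms_def)
  fix n assume "n \<in> {0..N}"
  then have m: "\<forall>i\<le>n. nrm (x i) \<le> m" and m': "\<forall>i\<in>{1..n}. nrm (x i - x (i - 1)) \<le> m'"
    unfolding m_def m'_def using mmax_ge mmax'_ge[of _ N nrm x] by auto
  have "0 \<le> e" "0 \<le> m" "0 \<le> m'" "n \<le> N"
    using mean_nonneg mmax_ge[of 0 N nrm x] is_norm_nonneg[OF assms(1)] mmax'_nonneg \<open>n \<in> {0..N}\<close>
    unfolding e_def m_def m'_def by (auto intro: order_trans)
  then have "2 * e * m \<le> 3 * e * m" "n * e * m' \<le> N * e * m'"
    by (auto intro!: mult_right_mono)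
  then show "nrm (integral\<^sup>L (PiM {1..n} (\<lambda>_. D)) (\<lambda>l. rim x l n - x n))
       \<le> min (3 * e * m) (min (e / (1 - e) * m') (real N * e * m'))"
    using norm_integral_rim_minus_le[OF assms(1) m m' \<open>0 \<le> m'\<close>] unfolding e_def by linarith
  show "integral\<^sup>L (PiM {1..<n} (\<lambda>_. D)) (\<lambda>l. nrm (rim x (l(n := t)) n - x n)) \<le> 2 * t * m"
    if "t \<in> {0..<1}" for t
    using integral_norm_rim_upd_minus_le[OF assms(1) m that] .
qed (rule rim_eq_sum)

end
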